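(* Let $(A,\mu_A)$, $(B,\mu_B)$ be associative algebras, $\alpha_A:A\to A$, $\alpha_B:B\to B$ bijective algebra endomorphisms, and $R:B\otimes A\to A\otimes B$ an $(\alpha_A,\alpha_B)$-twisting map, written $R(b\otimes a)=a_R\otimes b_R$. Then the linear map $T:(A\otimes B)\otimes(A\otimes B)\to(A\otimes B)\otimes(A\otimes B)$, $T((a\otimes b)\otimes(a'\otimes b'))=(\alpha_A(a)\otimes b_R)\otimes(a'_R\otimes\alpha_B(b'))$, is an $(\alpha_A\otimes\alpha_B)$-pseudotwistor for the associative tensor product algebra $A\otimes B$, with companions $\tilde T_1=T_{13}\circ(\alpha_A^{-1}\otimes\alpha_B^{-1}\otimes\mathrm{id}_A\otimes\mathrm{id}_B\otimes\mathrm{id}_A\otimes\mathrm{id}_B)$ and $\tilde T_2=T_{13}\circ(\mathrm{id}_A\otimes\mathrm{id}_B\otimes\mathrm{id}_A\otimes\mathrm{id}_B\otimes\alpha_A^{-1}\otimes\alpha_B^{-1})$. The resulting Hom-associative algebra $(A\otimes B)^T_{\alpha_A\otimes\alpha_B}$ has multiplication $(a\otimes b)(a'\otimes b')=\alpha_A(a)a'_R\otimes b_R\alpha_B(b')$ and structure map $\alpha_A\otimes\alpha_B$.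
   Context: Over a field $k$; algebras not assumed unital; $A\otimes B$ has product $(a\otimes b)(a'\otimes b')=aa'\otimes bb'$. An $(\alpha_A,\alpha_B)$-twisting map is a linear $R:B\otimes A\to A\otimes B$ with $(\alpha_A\otimes\alpha_B)\circ R=R\circ(\alpha_B\otimes\alpha_A)$, $R\circ(\mathrm{id}_B\otimes\mu_A)=(\mu_A\otimes\mathrm{id}_B)\circ(\mathrm{id}_A\otimes R)\circ(\mathrm{id}_A\otimes\alpha_B^{-1}\otimes\mathrm{id}_A)\circ(R\otimes\mathrm{id}_A)$, $R\circ(\mu_B\otimes\mathrm{id}_A)=(\mathrm{id}_A\otimes\mu_B)\circ(R\otimes\mathrm{id}_B)\circ(\mathrm{id}_B\otimes\alpha_A^{-1}\otimes\mathrm{id}_B)\circ(\mathrm{id}_B\otimes R)$. For an associative algebra $(D,\mu)$ with algebra endomorphism $\alpha$, an $\alpha$-pseudotwistor with companions $\tilde T_1,\tilde T_2$ is a linear $T:D\otimes D\to D\otimes D$ with linear $\tilde T_1,\tilde T_2:D^{\otimes3}\to D^{\otimes3}$ satisfying $(\alpha\otimes\alpha)\circ T=T\circ(\alpha\otimes\alpha)$, $T\circ(\mathrm{id}_D\otimes\mu)=(\mathrm{id}_D\otimes\mu)\circ\tilde T_1\circ(T\otimes\mathrm{id}_D)$, $T\circ(\mu\otimes\mathrm{id}_D)=(\mu\otimes\mathrm{id}_D)\circ\tilde T_2\circ(\mathrm{id}_D\otimes T)$, $\tilde T_1\circ(T\otimes\mathrm{id}_D)\circ(\alpha\otimes T)=\tilde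 T_2\circ(\mathrm{id}_D\otimes T)\circ(T\otimes\alpha)$; then $D^T_\alpha:=(D,\mu\circ T,\alpha)$ is Hom-associative ($\alpha(xy)=\alpha(x)\alpha(y)$, $\alpha(x)(yz)=(xy)\alpha(z)$). For $T$ written $T(d\otimes d')=d^T\otimes d'_T$ ($d,d'\in D=A\otimes B$), $T_{13}(d\otimes d'\otimes d'')=d^T\otimes d'\otimes d''_T$. *)

theory Defs
  imports Main "HOL-Library.Poly_Mapping"
begin

text \<open>Vector spaces over a field 'k are modelled in coordinates: a k-vector space with
basis indexed by the type 'i is the space of finitely supported functions 'i =>0 'k.
The tensor product of the coordinate spaces on 'i and 'j is the coordinate space on 'i * 'j,
iterated tensor products are nested pairs of indices.\<close>

definition vsmul :: "'k::field \<Rightarrow> ('i \<Rightarrow>\<^sub>0 'k) \<Rightarrow> ('i \<Rightarrow>\<^sub>0 'k)" where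
  "vsmul c x = Poly_Mapping.map (\<lambda>v. c * v) x"

definition bvec :: "'i \<Rightarrow> ('i \<Rightarrow>\<^sub>0 'k::field)" where
  "bvec i = Poly_Mapping.single i 1"

definition klinear :: "(('i \<Rightarrow>\<^sub>0 'k::field) \<Rightarrow> ('j \<Rightarrow>\<^sub>0 'k)) \<Rightarrow> bool" where
  "klinear f \<longleftrightarrow> (\<forall>x y. f (x + y) = f x + f y) \<and> (\<forall>c x. f (vsmul c x) = vsmul c (f x))"

definition kbilinear :: "(('i \<Rightarrow>\<^sub>0 'k::field) \<Rightarrow> ('j \<Rightarrow>\<^sub>0 'k) \<Rightarrow> ('l \<Rightarrow>\<^sub>0 'k)) \<Rightarrow> bool" where
  "kbilinear m \<longleftrightarrow> (\<forall>x. klinear (m x)) \<and> (\<forall>y. klinear (\<lambda>x. m x y))"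

definition lext :: "('i \<Rightarrow> ('j \<Rightarrow>\<^sub>0 'k::field)) \<Rightarrow> ('i \<Rightarrow>\<^sub>0 'k) \<Rightarrow> ('j \<Rightarrow>\<^sub>0 'k)" where
  "lext g x = (\<Sum>i\<in>Poly_Mapping.keys x. vsmul (Poly_Mapping.lookup x i) (g i))"

definition tens :: "('i \<Rightarrow>\<^sub>0 'k::field) \<Rightarrow> ('j \<Rightarrow>\<^sub>0 'k) \<Rightarrow> ('i \<times> 'j \<Rightarrow>\<^sub>0 'k)" where
  "tens x y = (\<Sum>i\<in>Poly_Mapping.keys x. \<Sum>j\<in>Poly_Mapping.keys y. Poly_Mapping.single (i, j) (Poly_Mapping.lookup x i * Poly_Mapping.lookup y j))"

definition tmap :: "(('i \<Rightarrow>\<^sub>0 'k::field) \<Rightarrow> ('i2 \<Rightarrow>\<^sub>0 'k)) \<Rightarrow> (('j \<Rightarrow>\<^sub>0 'k) \<Rightarrow> ('j2 \<Rightarrow>\<^sub>0 'k))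
    \<Rightarrow> ('i \<times> 'j \<Rightarrow>\<^sub>0 'k) \<Rightarrow> ('i2 \<times> 'j2 \<Rightarrow>\<^sub>0 'k)" where
  "tmap f g = lext (\<lambda>(i, j). tens (f (bvec i)) (g (bvec j)))"

definition reidx :: "('i \<Rightarrow> 'j) \<Rightarrow> ('i \<Rightarrow>\<^sub>0 'k::field) \<Rightarrow> ('j \<Rightarrow>\<^sub>0 'k)" where
  "reidx h = lext (\<lambda>i. bvec (h i))"

definition r2l :: "('a \<times> 'b \<times> 'c \<Rightarrow>\<^sub>0 'k::field) \<Rightarrow> (('a \<times> 'b) \<times> 'c \<Rightarrow>\<^sub>0 'k)" where
  "r2l = reidx (\<lambda>(a, b, c). ((a, b), c))"

definition l2r :: "(('a \<times> 'b) \<times> 'c \<Rightarrow>\<^sub>0 'k::field) \<Rightarrow> ('a \<times> 'b \<times> 'c \<Rightarrow>\<^sub>0 'k)" where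
  "l2r = reidx (\<lambda>((a, b), c). (a, b, c))"

definition flip :: "('a \<times> 'b \<Rightarrow>\<^sub>0 'k::field) \<Rightarrow> ('b \<times> 'a \<Rightarrow>\<^sub>0 'k)" where
  "flip = reidx (\<lambda>(a, b). (b, a))"

definition mlin :: "(('i \<Rightarrow>\<^sub>0 'k::field) \<Rightarrow> ('i \<Rightarrow>\<^sub>0 'k) \<Rightarrow> ('i \<Rightarrow>\<^sub>0 'k))
    \<Rightarrow> ('i \<times> 'i \<Rightarrow>\<^sub>0 'k) \<Rightarrow> ('i \<Rightarrow>\<^sub>0 'k)" where
  "mlin m = lext (\<lambda>(i, i'). m (bvec i) (bvec i'))"

definition assoc_alg :: "(('i \<Rightarrow>\<^sub>0 'k::field) \<Rightarrow> ('i \<Rightarrow>\<^sub>0 'k) \<Rightarrow> ('i \<Rightarrow>\<^sub>0 'k)) \<Rightarrow> bool" where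
  "assoc_alg m \<longleftrightarrow> kbilinear m \<and> (\<forall>x y z. m (m x y) z = m x (m y z))"

definition alg_endo :: "(('i \<Rightarrow>\<^sub>0 'k::field) \<Rightarrow> ('i \<Rightarrow>\<^sub>0 'k) \<Rightarrow> ('i \<Rightarrow>\<^sub>0 'k))
    \<Rightarrow> (('i \<Rightarrow>\<^sub>0 'k) \<Rightarrow> ('i \<Rightarrow>\<^sub>0 'k)) \<Rightarrow> bool" where
  "alg_endo m \<alpha> \<longleftrightarrow> klinear \<alpha> \<and> (\<forall>x y. \<alpha> (m x y) = m (\<alpha> x) (\<alpha> y))"

definition tens_mult :: "(('i \<Rightarrow>\<^sub>0 'k::field) \<Rightarrow> ('i \<Rightarrow>\<^sub>0 'k) \<Rightarrow> ('i \<Rightarrow>\<^sub>0 'k))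
    \<Rightarrow> (('j \<Rightarrow>\<^sub>0 'k) \<Rightarrow> ('j \<Rightarrow>\<^sub>0 'k) \<Rightarrow> ('j \<Rightarrow>\<^sub>0 'k))
    \<Rightarrow> ('i \<times> 'j \<Rightarrow>\<^sub>0 'k) \<Rightarrow> ('i \<times> 'j \<Rightarrow>\<^sub>0 'k) \<Rightarrow> ('i \<times> 'j \<Rightarrow>\<^sub>0 'k)" where
  "tens_mult mA mB x y =
     lext (\<lambda>((i, j), (i', j')). tens (mA (bvec i) (bvec i')) (mB (bvec j) (bvec j'))) (tens x y)"

definition twisting_map ::
  "(('i \<Rightarrow>\<^sub>0 'k::field) \<Rightarrow> ('i \<Rightarrow>\<^sub>0 'k) \<Rightarrow> ('i \<Rightarrow>\<^sub>0 'k))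
   \<Rightarrow> (('j \<Rightarrow>\<^sub>0 'k) \<Rightarrow> ('j \<Rightarrow>\<^sub>0 'k) \<Rightarrow> ('j \<Rightarrow>\<^sub>0 'k))
   \<Rightarrow> (('i \<Rightarrow>\<^sub>0 'k) \<Rightarrow> ('i \<Rightarrow>\<^sub>0 'k)) \<Rightarrow> (('j \<Rightarrow>\<^sub>0 'k) \<Rightarrow> ('j \<Rightarrow>\<^sub>0 'k))
   \<Rightarrow> (('j \<times> 'i \<Rightarrow>\<^sub>0 'k) \<Rightarrow> ('i \<times> 'j \<Rightarrow>\<^sub>0 'k)) \<Rightarrow> bool" where
  "twisting_map mA mB \<alpha>A \<alpha>B R \<longleftrightarrow>
     klinear R \<and>
     tmap \<alpha>A \<alpha>B \<circ> R = R \<circ> tmap \<alpha>B \<alpha>A \<and>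
     \<comment> \<open>B \<otimes> (A \<otimes> A) \<rightarrow> A \<otimes> B\<close>
     R \<circ> tmap id (mlin mA) =
       tmap (mlin mA) id \<circ> r2l \<circ> tmap id R \<circ> l2r \<circ> tmap (tmap id (inv \<alpha>B)) id
         \<circ> tmap R id \<circ> r2l \<and>
     \<comment> \<open>(B \<otimes> B) \<otimes> A \<rightarrow> A \<otimes> B\<close>
     R \<circ> tmap (mlin mB) id =
       tmap id (mlin mB) \<circ> l2r \<circ> tmap R id \<circ> r2l \<circ> tmap id (tmap (inv \<alpha>A) id)
         \<circ> tmap id R \<circ> l2r"

definition pseudotwistor ::
  "(('d \<times> 'd \<Rightarrow>\<^sub>0 'k::field) \<Rightarrow> ('d \<Rightarrow>\<^sub>0 'k))
   \<Rightarrow> (('d \<Rightarrow>\<^sub>0 'k) \<Rightarrow> ('d \<Rightarrow>\<^sub>0 'k))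
   \<Rightarrow> (('d \<times> 'd \<Rightarrow>\<^sub>0 'k) \<Rightarrow> ('d \<times> 'd \<Rightarrow>\<^sub>0 'k))
   \<Rightarrow> (('d \<times> 'd \<times> 'd \<Rightarrow>\<^sub>0 'k) \<Rightarrow> ('d \<times> 'd \<times> 'd \<Rightarrow>\<^sub>0 'k))
   \<Rightarrow> (('d \<times> 'd \<times> 'd \<Rightarrow>\<^sub>0 'k) \<Rightarrow> ('d \<times> 'd \<times> 'd \<Rightarrow>\<^sub>0 'k)) \<Rightarrow> bool" where
  "pseudotwistor mu \<alpha> T T1 T2 \<longleftrightarrow>
     klinear T \<and> klinear T1 \<and> klinear T2 \<and>
     tmap \<alpha> \<alpha> \<circ> T = T \<circ> tmap \<alpha> \<alpha> \<and>
     T \<circ> tmap id mu = tmap id mu \<circ> T1 \<circ> l2r \<circ> tmap T id \<circ> r2l \<and>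
     T \<circ> tmap mu id \<circ> r2l = tmap mu id \<circ> r2l \<circ> T2 \<circ> tmap id T \<and>
     T1 \<circ> l2r \<circ> tmap T id \<circ> r2l \<circ> tmap \<alpha> T =
       T2 \<circ> tmap id T \<circ> l2r \<circ> tmap T \<alpha> \<circ> r2l"

definition T13 :: "(('d \<times> 'd \<Rightarrow>\<^sub>0 'k::field) \<Rightarrow> ('d \<times> 'd \<Rightarrow>\<^sub>0 'k))
    \<Rightarrow> ('d \<times> 'd \<times> 'd \<Rightarrow>\<^sub>0 'k) \<Rightarrow> ('d \<times> 'd \<times> 'd \<Rightarrow>\<^sub>0 'k)" where
  "T13 T = reidx (\<lambda>((x, z), y). (x, y, z)) \<circ> tmap T id \<circ> reidx (\<lambda>(x, y, z). ((x, z), y))"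

definition hom_associative :: "(('d \<Rightarrow>\<^sub>0 'k::field) \<Rightarrow> ('d \<Rightarrow>\<^sub>0 'k) \<Rightarrow> ('d \<Rightarrow>\<^sub>0 'k))
    \<Rightarrow> (('d \<Rightarrow>\<^sub>0 'k) \<Rightarrow> ('d \<Rightarrow>\<^sub>0 'k)) \<Rightarrow> bool" where
  "hom_associative m \<alpha> \<longleftrightarrow> kbilinear m \<and> klinear \<alpha> \<and>
     (\<forall>x y. \<alpha> (m x y) = m (\<alpha> x) (\<alpha> y)) \<and>
     (\<forall>x y z. m (\<alpha> x) (m y z) = m (m x y) (\<alpha> z))"

end

theory Submission
  imports Defs
begin

text \<open>All maps involved are linear, so every identity between composites of them only has to be
checked on pure tensors (a \<otimes> b) \<otimes> (a' \<otimes> b') resp. on products of three such factors. There T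
evaluates to \<alpha>A a \<otimes> R(b \<otimes> a') \<otimes> \<alpha>B b', and the pseudotwistor identities reduce to those of
the twisting map: the two multiplicativity identities of T come from the two multiplicativity
identities of R, while the commutation of T with \<alpha> and the identity between the companions come
from the compatibility of R with \<alpha>A \<otimes> \<alpha>B. Hom-associativity of \<mu> \<circ> T is then the general fact
that a pseudotwistor deforms an associative algebra into a Hom-associative one.\<close>

section \<open>Linear algebra in coordinates\<close>

lemma lookup_vsmul [simp]: "Poly_Mapping.lookup (vsmul c x) k = c * Poly_Mapping.lookup x k"
  by (simp add: vsmul_def Poly_Mapping.map.rep_eq when_def)

lemma lookup_bvec: "Poly_Mapping.lookup (bvec i) k = (if i = k then 1 else 0)"
  by (simp add: bvec_def lookup_single when_def)

lemma lookup_tens [simp]: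
  "Poly_Mapping.lookup (tens x y) (i, j) = Poly_Mapping.lookup x i * Poly_Mapping.lookup y j"
proof -
  have "Poly_Mapping.lookup (tens x y) (i, j) =
    (\<Sum>i'\<in>Poly_Mapping.keys x. \<Sum>j'\<in>Poly_Mapping.keys y.
       if i' = i \<and> j' = j then Poly_Mapping.lookup x i' * Poly_Mapping.lookup y j' else 0)"
    by (simp add: tens_def lookup_sum lookup_single when_def)
  also have "\<dots> = (\<Sum>i'\<in>Poly_Mapping.keys x. if i' = i then
      (\<Sum>j'\<in>Poly_Mapping.keys y. if j' = j then Poly_Mapping.lookup x i' * Poly_Mapping.lookup y j' else 0)
      else 0)"
    by (intro sum.cong) auto
  also have "\<dots> = Poly_Mapping.lookup x i * Poly_Mapping.lookup y j"
    by (simp add: in_keys_iff)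
  finally show ?thesis .
qed

lemma vsmul_add_right: "vsmul c (x + y) = vsmul c x + vsmul c y"
  by (rule poly_mapping_eqI) (simp add: lookup_add algebra_simps)

lemma vsmul_add_left: "vsmul (a + b) x = vsmul a x + vsmul b x"
  by (rule poly_mapping_eqI) (simp add: lookup_add algebra_simps)

lemma vsmul_vsmul: "vsmul a (vsmul b x) = vsmul (a * b) x"
  by (rule poly_mapping_eqI) simp

lemma vsmul_zero_left [simp]: "vsmul 0 x = 0"
  by (rule poly_mapping_eqI) simp

lemma vsmul_sum: "vsmul c (sum f S) = (\<Sum>i\<in>S. vsmul c (f i))"
  by (rule poly_mapping_eqI) (simp add: lookup_sum sum_distrib_left)

lemma klinear_add: "klinear f \<Longrightarrow> f (x + y) = f x + f y"
  by (simp add: klinear_def)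

lemma klinear_vsmul: "klinear f \<Longrightarrow> f (vsmul c x) = vsmul c (f x)"
  by (simp add: klinear_def)

lemma klinear_zero: "klinear f \<Longrightarrow> f 0 = 0"
  by (metis add_cancel_right_right klinear_add)

lemma klinear_sum: "klinear f \<Longrightarrow> f (sum g S) = (\<Sum>i\<in>S. f (g i))"
  by (induction S rule: infinite_finite_induct) (simp_all add: klinear_zero klinear_add)

lemma bvec_expansion: "x = (\<Sum>i\<in>Poly_Mapping.keys x. vsmul (Poly_Mapping.lookup x i) (bvec i))"
proof (rule poly_mapping_eqI)
  fix k
  have "Poly_Mapping.lookup (\<Sum>i\<in>Poly_Mapping.keys x. vsmul (Poly_Mapping.lookup x i) (bvec i)) k
      = (\<Sum>i\<in>Poly_Mapping.keys x. if i = k then Poly_Mapping.lookup x i else 0)"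
    by (simp add: lookup_sum lookup_bvec if_distrib cong: if_cong)
  also have "\<dots> = Poly_Mapping.lookup x k"
    by (simp add: in_keys_iff)
  finally show "Poly_Mapping.lookup x k =
      Poly_Mapping.lookup (\<Sum>i\<in>Poly_Mapping.keys x. vsmul (Poly_Mapping.lookup x i) (bvec i)) k" ..
qed

lemma klinear_eq_on_bvec:
  assumes "klinear F" "klinear G" "\<And>i. F (bvec i) = G (bvec i)"
  shows "F x = G x"
  by (subst (1 2) bvec_expansion) (simp add: assms klinear_sum klinear_vsmul)

lemma klinear_eqI_bvec:
  assumes "klinear F" "klinear G" "\<And>i. F (bvec i) = G (bvec i)"
  shows "F = G"
  using klinear_eq_on_bvec[OF assms] by blast

lemma lext_eq_sum_superset:
  assumes "finite S" "Poly_Mapping.keys x \<subseteq> S"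
  shows "lext g x = (\<Sum>i\<in>S. vsmul (Poly_Mapping.lookup x i) (g i))"
  unfolding lext_def
  by (rule sum.mono_neutral_left[OF assms]) (auto simp: in_keys_iff)

lemma klinear_lext: "klinear (lext g)"
  unfolding klinear_def
proof (intro conjI allI)
  fix x y :: "'a \<Rightarrow>\<^sub>0 'b"
  let ?S = "Poly_Mapping.keys x \<union> Poly_Mapping.keys y"
  have "lext g (x + y) = (\<Sum>i\<in>?S. vsmul (Poly_Mapping.lookup (x + y) i) (g i))"
    by (rule lext_eq_sum_superset) (auto simp: keys_add)
  also have "\<dots> = (\<Sum>i\<in>?S. vsmul (Poly_Mapping.lookup x i) (g i))
                 + (\<Sum>i\<in>?S. vsmul (Poly_Mapping.lookup y i) (g i))"
    by (simp add: lookup_add vsmul_add_left sum.distrib)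
  also have "\<dots> = lext g x + lext g y"
    using lext_eq_sum_superset[of ?S x g] lext_eq_sum_superset[of ?S y g] by simp
  finally show "lext g (x + y) = lext g x + lext g y" .
next
  fix c and x :: "'a \<Rightarrow>\<^sub>0 'b"
  have "lext g (vsmul c x) =
      (\<Sum>i\<in>Poly_Mapping.keys x. vsmul (Poly_Mapping.lookup (vsmul c x) i) (g i))"
    by (rule lext_eq_sum_superset) (auto simp: in_keys_iff)
  also have "\<dots> = vsmul c (lext g x)"
    by (simp add: lext_def vsmul_sum vsmul_vsmul)
  finally show "lext g (vsmul c x) = vsmul c (lext g x)" .
qed

lemma lext_bvec [simp]: "lext g (bvec i) = g i"
proof -
  have "lext g (bvec i) = (\<Sum>k\<in>{i}. vsmul (Poly_Mapping.lookup (bvec i) k) (g k))"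
    by (rule lext_eq_sum_superset) (auto simp: in_keys_iff lookup_bvec split: if_splits)
  also have "\<dots> = g i"
    by (simp add: lookup_bvec) (rule poly_mapping_eqI, simp)
  finally show ?thesis .
qed

lemma bvec_Pair: "bvec (i, j) = tens (bvec i) (bvec j)"
  by (rule poly_mapping_eqI) (auto simp: lookup_bvec split: if_splits)

lemma klinear_tens_left: "klinear (\<lambda>x. tens x y)"
  unfolding klinear_def by (auto intro!: poly_mapping_eqI simp: lookup_add algebra_simps)

lemma klinear_tens_right: "klinear (tens x)"
  unfolding klinear_def by (auto intro!: poly_mapping_eqI simp: lookup_add algebra_simps)

lemma klinear_id: "klinear (\<lambda>x. x)" "klinear id"
  by (auto simp: klinear_def)

lemma klinear_comp: "klinear f \<Longrightarrow> klinear g \<Longrightarrow> klinear (f \<circ> g)"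
  by (simp add: klinear_def)

lemma klinear_compose: "klinear f \<Longrightarrow> klinear g \<Longrightarrow> klinear (\<lambda>x. f (g x))"
  by (simp add: klinear_def)

lemma klinear_tmap: "klinear (tmap f g)"
  by (simp add: tmap_def klinear_lext)

lemma klinear_reidx: "klinear (reidx h)"
  by (simp add: reidx_def klinear_lext)

lemma klinear_mlin: "klinear (mlin m)"
  by (simp add: mlin_def klinear_lext)

lemma klinear_inv:
  assumes "klinear f" "bij f"
  shows "klinear (inv f)"
proof -
  have f_inv: "f (inv f y) = y" for y
    using assms(2) by (simp add: bij_is_surj surj_f_inv_f)
  have inv_f: "inv f (f x) = x" for x
    using assms(2) by (simp add: bij_is_inj)
  show ?thesis
    unfolding klinear_def
    by (metis f_inv inv_f klinear_add[OF assms(1)] klinear_vsmul[OF assms(1)])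
qed

lemma klinear_l2r: "klinear l2r"
  by (simp add: l2r_def klinear_reidx)

lemma klinear_r2l: "klinear r2l"
  by (simp add: r2l_def klinear_reidx)

lemma klinear_flip: "klinear flip"
  by (simp add: flip_def klinear_reidx)

lemmas klinear_basic [simp] =
  klinear_id klinear_tmap klinear_reidx klinear_l2r klinear_r2l klinear_flip klinear_mlin

named_theorems klinear_intros
lemma [klinear_intros]: "klinear F \<Longrightarrow> klinear (\<lambda>u. tens (F u) y)"
  by (rule klinear_compose[OF klinear_tens_left])
lemma [klinear_intros]: "klinear F \<Longrightarrow> klinear (\<lambda>u. tens x (F u))"
  by (rule klinear_compose[OF klinear_tens_right])
lemma [klinear_intros]: "klinear F \<Longrightarrow> klinear (\<lambda>u. tmap f g (F u))"
  by (rule klinear_compose[OF klinear_tmap])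
lemma [klinear_intros]: "klinear F \<Longrightarrow> klinear (\<lambda>u. reidx h (F u))"
  by (rule klinear_compose[OF klinear_reidx])
lemma [klinear_intros]: "klinear F \<Longrightarrow> klinear (\<lambda>u. l2r (F u))"
  by (rule klinear_compose[OF klinear_l2r])
lemma [klinear_intros]: "klinear F \<Longrightarrow> klinear (\<lambda>u. r2l (F u))"
  by (rule klinear_compose[OF klinear_r2l])
lemma [klinear_intros]: "klinear F \<Longrightarrow> klinear (\<lambda>u. flip (F u))"
  by (rule klinear_compose[OF klinear_flip])
lemma [klinear_intros]: "klinear F \<Longrightarrow> klinear (\<lambda>u. mlin m (F u))"
  by (rule klinear_compose[OF klinear_mlin])

lemma klinear_eqI_tens:
  assumes "klinear F" "klinear G" "\<And>x y. F (tens x y) = G (tens x y)"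
  shows "F = G"
  by (rule klinear_eqI_bvec[OF assms(1,2)]) (auto simp: bvec_Pair assms(3))

lemma klinear_eqI_tens22:
  assumes "klinear F" "klinear G"
    and "\<And>a b a' b'. F (tens (tens a b) (tens a' b')) = G (tens (tens a b) (tens a' b'))"
  shows "F = G"
  by (rule klinear_eqI_bvec[OF assms(1,2)]) (auto simp: bvec_Pair assms(3))

lemma klinear_eqI_tens222:
  assumes "klinear F" "klinear G"
    and "\<And>a b a' b' a'' b''. F (tens (tens a b) (tens (tens a' b') (tens a'' b'')))
                             = G (tens (tens a b) (tens (tens a' b') (tens a'' b'')))"
  shows "F = G"
  by (rule klinear_eqI_bvec[OF assms(1,2)]) (auto simp: bvec_Pair assms(3))

lemma bilinear_eq_on_bvec:
  assumes "\<And>y. klinear (\<lambda>x. F x y)" "\<And>x. klinear (F x)"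
    and "\<And>y. klinear (\<lambda>x. G x y)" "\<And>x. klinear (G x)"
    and "\<And>i j. F (bvec i) (bvec j) = G (bvec i) (bvec j)"
  shows "F x y = G x y"
proof -
  have "F x (bvec j) = G x (bvec j)" for j
    using klinear_eq_on_bvec[of "\<lambda>x. F x (bvec j)" "\<lambda>x. G x (bvec j)"] assms by blast
  then show ?thesis
    using klinear_eq_on_bvec[of "F x" "G x"] assms by blast
qed

lemma bilinear_eq_on_tens:
  assumes "\<And>y. klinear (\<lambda>x. F x y)" "\<And>x. klinear (F x)"
    and "\<And>y. klinear (\<lambda>x. G x y)" "\<And>x. klinear (G x)"
    and "\<And>x1 y1 x2 y2. F (tens x1 y1) (tens x2 y2) = G (tens x1 y1) (tens x2 y2)"
  shows "F x y = G x y"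
  by (rule bilinear_eq_on_bvec) (use assms in \<open>auto simp: bvec_Pair\<close>)

lemma lext_tens_bilinear:
  assumes "\<And>y. klinear (\<lambda>x. f x y)" "\<And>x. klinear (f x)"
  shows "lext (\<lambda>(i, j). f (bvec i) (bvec j)) (tens x y) = f x y"
  by (rule bilinear_eq_on_bvec[where F="\<lambda>x y. lext (\<lambda>(i, j). f (bvec i) (bvec j)) (tens x y)"])
     (use assms in \<open>auto simp: bvec_Pair[symmetric]
        intro: klinear_compose[OF klinear_lext klinear_tens_left]
               klinear_compose[OF klinear_lext klinear_tens_right]\<close>)

lemma klinear_lext_param:
  assumes "\<And>i j. klinear (\<lambda>u. g u i j)"
  shows "klinear (\<lambda>u. lext (\<lambda>(i, j). g u i j) w)"
  unfolding klinear_def lext_def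
  by (simp add: case_prod_beta klinear_add[OF assms] klinear_vsmul[OF assms]
      vsmul_add_right sum.distrib vsmul_sum vsmul_vsmul mult.commute)

text \<open>Both \<phi> v and \<psi> u are the value at (u, v) of the bilinear extension of E, equivalently of E'.
This settles identities in which each side can evaluate only one of two non-pure tensors u, v.\<close>
lemma tens_evaluation_interchange:
  assumes "klinear \<phi>" "klinear \<psi>"
    and \<phi>_tens: "\<And>x y. \<phi> (tens x y) = E u x y"
    and \<psi>_tens: "\<And>x y. \<psi> (tens x y) = E' x y v"
    and E_lin: "\<And>x y. klinear (\<lambda>w. E w x y)" "\<And>w y. klinear (\<lambda>x. E w x y)" "\<And>w x. klinear (E w x)"
    and E'_lin: "\<And>y z. klinear (\<lambda>x. E' x y z)" "\<And>x z. klinear (\<lambda>y. E' x y z)" "\<And>x y. klinear (E' x y)"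
    and E_E': "\<And>x1 y1 x2 y2. E (tens x1 y1) x2 y2 = E' x1 y1 (tens x2 y2)"
  shows "\<phi> v = \<psi> u"
proof -
  let ?L = "\<lambda>w. lext (\<lambda>(i, j). E w (bvec i) (bvec j))"
  let ?L' = "\<lambda>w. lext (\<lambda>(i, j). E' (bvec i) (bvec j) w)"
  have L_tens: "?L w (tens x y) = E w x y" for w x y
    by (rule lext_tens_bilinear) (use E_lin in auto)
  have L'_tens: "?L' w (tens x y) = E' x y w" for w x y
    by (rule lext_tens_bilinear[where f="\<lambda>x y. E' x y w"]) (use E'_lin in auto)
  have "\<phi> = ?L u"
    by (rule klinear_eqI_tens) (simp_all add: assms(1) klinear_lext \<phi>_tens L_tens)
  moreover have "\<psi> = ?L' v"
    by (rule klinear_eqI_tens) (simp_all add: assms(2) klinear_lext \<psi>_tens L'_tens)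
  moreover have "?L u v = ?L' v u"
  proof (rule bilinear_eq_on_tens[where F="\<lambda>u v. ?L u v" and G="\<lambda>u v. ?L' v u"])
    show "?L (tens x1 y1) (tens x2 y2) = ?L' (tens x2 y2) (tens x1 y1)" for x1 y1 x2 y2
      unfolding L_tens L'_tens by (rule E_E')
  qed (use E_lin E'_lin in \<open>simp_all add: klinear_lext klinear_lext_param\<close>)
  ultimately show ?thesis
    by simp
qed

lemma tmap_tens [simp]:
  assumes "klinear f" "klinear g"
  shows "tmap f g (tens x y) = tens (f x) (g y)"
  unfolding tmap_def
  by (rule lext_tens_bilinear[where f="\<lambda>x y. tens (f x) (g y)"])
     (simp_all add: assms klinear_compose[OF klinear_tens_left] klinear_compose[OF klinear_tens_right])

lemma reidx_bvec [simp]: "reidx h (bvec i) = bvec (h i)"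
  by (simp add: reidx_def)

lemma lookup_reidx:
  assumes "\<And>k. h (g k) = k" "\<And>i. g (h i) = i"
  shows "Poly_Mapping.lookup (reidx h x) k = Poly_Mapping.lookup x (g k)"
proof -
  have h_eq: "h i = k \<longleftrightarrow> i = g k" for i
    using assms by metis
  have "Poly_Mapping.lookup (reidx h x) k =
      (\<Sum>i\<in>Poly_Mapping.keys x. Poly_Mapping.lookup x i * (if h i = k then 1 else 0))"
    unfolding reidx_def lext_def by (simp add: lookup_sum lookup_bvec)
  also have "\<dots> = (\<Sum>i\<in>Poly_Mapping.keys x. if i = g k then Poly_Mapping.lookup x i else 0)"
    by (rule sum.cong) (auto simp: h_eq)
  also have "\<dots> = Poly_Mapping.lookup x (g k)"
    by (simp add: in_keys_iff)
  finally show ?thesis .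
qed

lemma l2r_tens [simp]: "l2r (tens (tens x y) z) = tens x (tens y z)"
  unfolding l2r_def
  by (rule poly_mapping_eqI, subst lookup_reidx[where g="\<lambda>(a, b, c). ((a, b), c)"]) (auto simp: mult.assoc)

lemma r2l_tens [simp]: "r2l (tens x (tens y z)) = tens (tens x y) z"
  unfolding r2l_def
  by (rule poly_mapping_eqI, subst lookup_reidx[where g="\<lambda>((a, b), c). (a, b, c)"]) (auto simp: mult.assoc)

lemma r2l_l2r [simp]: "r2l (l2r v) = v"
  using fun_cong[OF klinear_eqI_bvec[of "r2l \<circ> l2r" id]] by (auto simp: klinear_comp l2r_def r2l_def)

lemma flip_tens [simp]: "flip (tens x y) = tens y x"
  unfolding flip_def
  by (rule poly_mapping_eqI, subst lookup_reidx[where g="\<lambda>(a, b). (b, a)"]) (auto simp: mult.commute)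

lemma reidx_tens_regroup [simp]:
  "reidx (\<lambda>(a, (b, a'), b'). ((a, b), (a', b'))) (tens x (tens (tens y z) w))
     = tens (tens x y) (tens z w)"
  by (rule poly_mapping_eqI, subst lookup_reidx[where g="\<lambda>((a, b), (a', b')). (a, (b, a'), b')"])
     (auto simp: ac_simps)

lemma reidx_tens_ungroup [simp]:
  "reidx (\<lambda>((a, b), (a', b')). (a, (b, a'), b')) (tens (tens x y) (tens z w))
     = tens x (tens (tens y z) w)"
  by (rule poly_mapping_eqI, subst lookup_reidx[where g="\<lambda>(a, (b, a'), b'). ((a, b), (a', b'))"])
     (auto simp: ac_simps)

lemma reidx_tens_middle_out [simp]:
  "reidx (\<lambda>(x, y, z). ((x, z), y)) (tens x (tens y z)) = tens (tens x z) y"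
  by (rule poly_mapping_eqI, subst lookup_reidx[where g="\<lambda>((x, z), y). (x, y, z)"])
     (auto simp: ac_simps)

lemma reidx_tens_middle_in [simp]:
  "reidx (\<lambda>((x, z), y). (x, y, z)) (tens (tens x z) y) = tens x (tens y z)"
  by (rule poly_mapping_eqI, subst lookup_reidx[where g="\<lambda>(x, y, z). ((x, z), y)"])
     (auto simp: ac_simps)

lemma reidx_tens_transpose [simp]:
  "reidx (\<lambda>((a, b), (a', b')). ((a, a'), (b, b'))) (tens (tens x y) (tens z w))
     = tens (tens x z) (tens y w)"
  by (rule poly_mapping_eqI, subst lookup_reidx[where g="\<lambda>((a, a'), (b, b')). ((a, b), (a', b'))"])
     (auto simp: ac_simps)

section \<open>Tensor product algebras and pseudotwistors\<close>

lemma mlin_tens: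
  assumes "kbilinear m"
  shows "mlin m (tens x y) = m x y"
  unfolding mlin_def by (rule lext_tens_bilinear) (use assms in \<open>auto simp: kbilinear_def\<close>)

lemma T13_tens [simp]:
  "klinear F \<Longrightarrow> T13 F (tens x (tens y z)) = reidx (\<lambda>((x, z), y). (x, y, z)) (tens (F (tens x z)) y)"
  unfolding T13_def by simp

lemma klinear_T13 [simp]: "klinear (T13 F)"
  unfolding T13_def by (intro klinear_comp klinear_basic)

lemma [klinear_intros]: "klinear F \<Longrightarrow> klinear (\<lambda>u. T13 G (F u))"
  by (rule klinear_compose[OF klinear_T13])

lemma kbilinear_tens_mult: "kbilinear (tens_mult mA mB)"
  unfolding kbilinear_def tens_mult_def
  by (auto intro: klinear_compose[OF klinear_lext klinear_tens_left]
                  klinear_compose[OF klinear_lext klinear_tens_right])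

lemma tens_mult_tens [simp]:
  assumes "kbilinear mA" "kbilinear mB"
  shows "tens_mult mA mB (tens a b) (tens a' b') = tens (mA a a') (mB b b')"
proof -
  have "lext (\<lambda>((i, j), (i', j')). tens (mA (bvec i) (bvec i')) (mB (bvec j) (bvec j')))
      = tmap (mlin mA) (mlin mB) \<circ> reidx (\<lambda>((a, b), (a', b')). ((a, a'), (b, b')))"
    by (rule klinear_eqI_bvec) (auto simp: klinear_lext klinear_comp bvec_Pair mlin_tens assms)
  then show ?thesis
    unfolding tens_mult_def by (simp add: mlin_tens assms)
qed

lemma mlin_tens_mult_tens [simp]:
  assumes "kbilinear mA" "kbilinear mB"
  shows "mlin (tens_mult mA mB) (tens (tens a b) (tens a' b')) = tens (mA a a') (mB b b')"
  by (simp add: mlin_tens kbilinear_tens_mult assms)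

lemma mlin_tens_mult_assoc:
  assumes "assoc_alg mA" "assoc_alg mB"
  shows "mlin (tens_mult mA mB) \<circ> tmap id (mlin (tens_mult mA mB))
       = mlin (tens_mult mA mB) \<circ> tmap (mlin (tens_mult mA mB)) id \<circ> r2l"
  using assms by (intro klinear_eqI_tens222) (auto simp: klinear_comp assoc_alg_def)

lemma tmap_mlin_tens_mult:
  assumes "kbilinear mA" "kbilinear mB" "alg_endo mA \<alpha>A" "alg_endo mB \<alpha>B"
  shows "tmap \<alpha>A \<alpha>B \<circ> mlin (tens_mult mA mB)
       = mlin (tens_mult mA mB) \<circ> tmap (tmap \<alpha>A \<alpha>B) (tmap \<alpha>A \<alpha>B)"
  using assms by (intro klinear_eqI_tens22) (auto simp: klinear_comp alg_endo_def)

lemma pseudotwistor_hom_associative: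
  fixes mu :: "('d \<times> 'd \<Rightarrow>\<^sub>0 'k::field) \<Rightarrow> ('d \<Rightarrow>\<^sub>0 'k)"
  assumes pt: "pseudotwistor mu \<alpha> T T1 T2"
    and "klinear mu" "klinear \<alpha>"
    and mu_assoc: "mu \<circ> tmap id mu = mu \<circ> tmap mu id \<circ> r2l"
    and \<alpha>_mult: "\<alpha> \<circ> mu = mu \<circ> tmap \<alpha> \<alpha>"
  shows "hom_associative (\<lambda>x y. mu (T (tens x y))) \<alpha>"
proof -
  have "klinear T" and T_\<alpha>: "tmap \<alpha> \<alpha> \<circ> T = T \<circ> tmap \<alpha> \<alpha>"
    and T_mu_right: "T \<circ> tmap id mu = tmap id mu \<circ> T1 \<circ> l2r \<circ> tmap T id \<circ> r2l"
    and T_mu_left: "T \<circ> tmap mu id \<circ> r2l = tmap mu id \<circ> r2l \<circ> T2 \<circ> tmap id T"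
    and T1_T2: "T1 \<circ> l2r \<circ> tmap T id \<circ> r2l \<circ> tmap \<alpha> T = T2 \<circ> tmap id T \<circ> l2r \<circ> tmap T \<alpha> \<circ> r2l"
    using pt by (simp_all add: pseudotwistor_def)
  note lin = \<open>klinear mu\<close> \<open>klinear \<alpha>\<close> \<open>klinear T\<close>
  show ?thesis
    unfolding hom_associative_def
  proof (intro conjI allI)
    show "kbilinear (\<lambda>x y. mu (T (tens x y)))"
      unfolding kbilinear_def
      by (intro conjI allI klinear_compose[OF klinear_compose[OF lin(1,3)]]
                klinear_tens_left klinear_tens_right)
    show "klinear \<alpha>"
      by (fact lin(2))
  next
    fix x y
    show "\<alpha> (mu (T (tens x y))) = mu (T (tens (\<alpha> x) (\<alpha> y)))"
      using fun_cong[OF \<alpha>_mult, of "T (tens x y)"] fun_cong[OF T_\<alpha>, of "tens x y"]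
      by (simp add: lin)
  next
    fix x y z :: "'d \<Rightarrow>\<^sub>0 'k"
    let ?w = "tens x (tens y z)"
    have "mu (T (tens (\<alpha> x) (mu (T (tens y z))))) = mu (T (tmap id mu (tmap \<alpha> T ?w)))"
      by (simp add: lin)
    also have "\<dots> = mu (tmap id mu (T1 (l2r (tmap T id (r2l (tmap \<alpha> T ?w))))))"
      by (simp only: fun_cong[OF T_mu_right, unfolded comp_apply])
    also have "\<dots> = mu (tmap id mu (T2 (tmap id T (l2r (tmap T \<alpha> (r2l ?w))))))"
      by (simp only: fun_cong[OF T1_T2, unfolded comp_apply])
    also have "\<dots> = mu (tmap mu id (r2l (T2 (tmap id T (l2r (tmap T \<alpha> (r2l ?w)))))))"
      by (simp only: fun_cong[OF mu_assoc, unfolded comp_apply])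
    also have "\<dots> = mu (T (tmap mu id (r2l (l2r (tmap T \<alpha> (r2l ?w))))))"
      by (simp only: fun_cong[OF T_mu_left, unfolded comp_apply])
    also have "\<dots> = mu (T (tens (mu (T (tens x y))) (\<alpha> z)))"
      by (simp add: lin)
    finally show "mu (T (tens (\<alpha> x) (mu (T (tens y z))))) = mu (T (tens (mu (T (tens x y))) (\<alpha> z)))" .
  qed
qed

section \<open>The pseudotwistor of a twisting map\<close>

definition twisting_twistor ::
  "(('i \<Rightarrow>\<^sub>0 'k::field) \<Rightarrow> ('i \<Rightarrow>\<^sub>0 'k)) \<Rightarrow> (('j \<Rightarrow>\<^sub>0 'k) \<Rightarrow> ('j \<Rightarrow>\<^sub>0 'k))
   \<Rightarrow> (('j \<times> 'i \<Rightarrow>\<^sub>0 'k) \<Rightarrow> ('i \<times> 'j \<Rightarrow>\<^sub>0 'k))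
   \<Rightarrow> (('i \<times> 'j) \<times> ('i \<times> 'j) \<Rightarrow>\<^sub>0 'k) \<Rightarrow> (('i \<times> 'j) \<times> ('i \<times> 'j) \<Rightarrow>\<^sub>0 'k)" where
  "twisting_twistor \<alpha>A \<alpha>B R = reidx (\<lambda>(a, (b, a'), b'). ((a, b), (a', b')))
     \<circ> tmap \<alpha>A (tmap (flip \<circ> R) \<alpha>B) \<circ> reidx (\<lambda>((a, b), (a', b')). (a, (b, a'), b'))"

lemma klinear_twisting_twistor: "klinear (twisting_twistor \<alpha>A \<alpha>B R)"
  unfolding twisting_twistor_def by (intro klinear_comp klinear_basic)

lemma twisting_twistor_tens:
  assumes "klinear \<alpha>A" "klinear \<alpha>B" "klinear R"
  shows "twisting_twistor \<alpha>A \<alpha>B R (tens (tens a b) (tens a' b'))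
       = reidx (\<lambda>(a, (b, a'), b'). ((a, b), (a', b'))) (tens (\<alpha>A a) (tens (flip (R (tens b a'))) (\<alpha>B b')))"
  unfolding twisting_twistor_def by (simp add: assms klinear_comp)

lemma twisted_mult_tens:
  assumes "kbilinear mA" "kbilinear mB" "klinear \<alpha>A" "klinear \<alpha>B" "klinear R"
  shows "mlin (tens_mult mA mB) (twisting_twistor \<alpha>A \<alpha>B R (tens (tens a b) (tens a' b')))
       = tmap (mA (\<alpha>A a)) (\<lambda>y. mB y (\<alpha>B b')) (R (tens b a'))"
proof -
  have "klinear (mA x)" "klinear (\<lambda>y. mB y z)" for x z
    using assms(1,2) by (auto simp: kbilinear_def)
  then have "(\<lambda>u. mlin (tens_mult mA mB)
              (reidx (\<lambda>(a, (b, a'), b'). ((a, b), (a', b'))) (tens (\<alpha>A a) (tens (flip u) (\<alpha>B b')))))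
      = tmap (mA (\<alpha>A a)) (\<lambda>y. mB y (\<alpha>B b'))"
    by (intro klinear_eqI_tens) (simp_all add: assms, (intro klinear_intros | simp)+)
  from fun_cong[OF this, of "R (tens b a')"] show ?thesis
    by (simp add: twisting_twistor_tens assms)
qed

locale twisting_datum =
  fixes mA :: "('i \<Rightarrow>\<^sub>0 'k::field) \<Rightarrow> ('i \<Rightarrow>\<^sub>0 'k) \<Rightarrow> ('i \<Rightarrow>\<^sub>0 'k)"
    and mB :: "('j \<Rightarrow>\<^sub>0 'k) \<Rightarrow> ('j \<Rightarrow>\<^sub>0 'k) \<Rightarrow> ('j \<Rightarrow>\<^sub>0 'k)"
    and \<alpha>A :: "('i \<Rightarrow>\<^sub>0 'k) \<Rightarrow> ('i \<Rightarrow>\<^sub>0 'k)"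
    and \<alpha>B :: "('j \<Rightarrow>\<^sub>0 'k) \<Rightarrow> ('j \<Rightarrow>\<^sub>0 'k)"
    and R :: "('j \<times> 'i \<Rightarrow>\<^sub>0 'k) \<Rightarrow> ('i \<times> 'j \<Rightarrow>\<^sub>0 'k)"
  assumes assoc_A: "assoc_alg mA" and assoc_B: "assoc_alg mB"
    and endo_A: "alg_endo mA \<alpha>A" and bij_A: "bij \<alpha>A"
    and endo_B: "alg_endo mB \<alpha>B" and bij_B: "bij \<alpha>B"
    and twisting: "twisting_map mA mB \<alpha>A \<alpha>B R"
begin

abbreviation "TR \<equiv> twisting_twistor \<alpha>A \<alpha>B R"
abbreviation "mu \<equiv> mlin (tens_mult mA mB)"
abbreviation "\<alpha> \<equiv> tmap \<alpha>A \<alpha>B"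
abbreviation "regroup \<equiv> reidx (\<lambda>(a, (b, a'), b'). ((a, b), (a', b')))"

lemma kbilinear_A: "kbilinear mA" and kbilinear_B: "kbilinear mB"
  using assoc_A assoc_B by (auto simp: assoc_alg_def)

lemma klinear_maps [simp]:
  "klinear \<alpha>A" "klinear \<alpha>B" "klinear R" "klinear (inv \<alpha>A)" "klinear (inv \<alpha>B)" "klinear TR"
  "klinear (mA x)" "klinear (\<lambda>x. mA x y)" "klinear (mB z)" "klinear (\<lambda>z. mB z w)"
  using endo_A endo_B twisting kbilinear_A kbilinear_B
  by (auto simp: alg_endo_def twisting_map_def kbilinear_def klinear_twisting_twistor
           intro: klinear_inv bij_A bij_B)

lemma [klinear_intros]:
  "klinear F\<^sub>1 \<Longrightarrow> klinear (\<lambda>u. R (F\<^sub>1 u))"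
  "klinear F\<^sub>2 \<Longrightarrow> klinear (\<lambda>u. \<alpha>A (F\<^sub>2 u))"
  "klinear F\<^sub>3 \<Longrightarrow> klinear (\<lambda>u. \<alpha>B (F\<^sub>3 u))"
  "klinear F\<^sub>4 \<Longrightarrow> klinear (\<lambda>u. TR (F\<^sub>4 u))"
  by (simp_all add: klinear_compose)

lemma inv_simps [simp]:
  "\<alpha>A (inv \<alpha>A x) = x" "inv \<alpha>A (\<alpha>A x) = x" "\<alpha>B (inv \<alpha>B y) = y" "inv \<alpha>B (\<alpha>B y) = y"
  using bij_A bij_B by (simp_all add: bij_is_surj surj_f_inv_f bij_is_inj)

lemma \<alpha>_mult [simp]: "\<alpha>A (mA x x') = mA (\<alpha>A x) (\<alpha>A x')" "\<alpha>B (mB y y') = mB (\<alpha>B y) (\<alpha>B y')"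
  using endo_A endo_B by (simp_all add: alg_endo_def)

lemma pure_tens_simps [simp]:
  "mlin mA (tens x x') = mA x x'" "mlin mB (tens y y') = mB y y'"
  "mu (tens (tens x y) (tens x' y')) = tens (mA x x') (mB y y')"
  "TR (tens (tens x y) (tens x' y')) = regroup (tens (\<alpha>A x) (tens (flip (R (tens y x'))) (\<alpha>B y')))"
  by (simp_all add: mlin_tens kbilinear_A kbilinear_B twisting_twistor_tens)

lemma R_\<alpha>: "R (tens (\<alpha>B b) (\<alpha>A a)) = \<alpha> (R (tens b a))"
proof -
  have "\<alpha> \<circ> R = R \<circ> tmap \<alpha>B \<alpha>A"
    using twisting by (simp add: twisting_map_def)
  from fun_cong[OF this, of "tens b a"] show ?thesis
    by simp
qed

lemma R_mult_A [simp]: "R (tens b (mA a a'')) =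
  tmap (mlin mA) id (r2l (tmap id R (l2r (tens (tmap id (inv \<alpha>B) (R (tens b a))) a''))))"
proof -
  have "R \<circ> tmap id (mlin mA) = tmap (mlin mA) id \<circ> r2l \<circ> tmap id R \<circ> l2r
          \<circ> tmap (tmap id (inv \<alpha>B)) id \<circ> tmap R id \<circ> r2l"
    using twisting by (simp add: twisting_map_def)
  from fun_cong[OF this, of "tens b (tens a a'')"] show ?thesis
    by simp
qed

lemma R_mult_B [simp]: "R (tens (mB b b') a) =
  tmap id (mlin mB) (l2r (tmap R id (r2l (tens b (tmap (inv \<alpha>A) id (R (tens b' a)))))))"
proof -
  have "R \<circ> tmap (mlin mB) id = tmap id (mlin mB) \<circ> l2r \<circ> tmap R id \<circ> r2l
          \<circ> tmap id (tmap (inv \<alpha>A) id) \<circ> tmap id R \<circ> l2r"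
    using twisting by (simp add: twisting_map_def)
  from fun_cong[OF this, of "tens (tens b b') a"] show ?thesis
    by simp
qed

abbreviation "companion1 \<equiv> T13 TR \<circ> tmap (tmap (inv \<alpha>A) (inv \<alpha>B)) id"
abbreviation "companion2 \<equiv> T13 TR \<circ> tmap id (tmap id (tmap (inv \<alpha>A) (inv \<alpha>B)))"

lemma twistor_commutes_\<alpha>: "tmap \<alpha> \<alpha> \<circ> TR = TR \<circ> tmap \<alpha> \<alpha>"
proof (rule klinear_eqI_tens22)
  fix a b a' b'
  have "(\<lambda>u. tmap \<alpha> \<alpha> (regroup (tens (\<alpha>A a) (tens (flip u) (\<alpha>B b')))))
      = (\<lambda>u. regroup (tens (\<alpha>A (\<alpha>A a)) (tens (flip (\<alpha> u)) (\<alpha>B (\<alpha>B b')))))"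
    by (rule klinear_eqI_tens) ((intro klinear_intros | simp)+)
  from fun_cong[OF this, of "R (tens b a')"]
  show "(tmap \<alpha> \<alpha> \<circ> TR) (tens (tens a b) (tens a' b')) = (TR \<circ> tmap \<alpha> \<alpha>) (tens (tens a b) (tens a' b'))"
    by (simp add: R_\<alpha>)
qed (simp_all add: klinear_comp)

text \<open>On generators the left side contains R(b \<otimes> a'a''), which is expanded by multiplicativity
of R in A; the remaining identity is linear in the non-pure tensors R(b \<otimes> a') and then
R(\<alpha>B\<inverse> y \<otimes> a''), so it suffices to check it on pure tensors, one after the other.\<close>
lemma twistor_mult_right:
  "TR \<circ> tmap id mu = tmap id mu \<circ> companion1 \<circ> l2r \<circ> tmap TR id \<circ> r2l" (is "?L = ?R")
proof (rule klinear_eqI_tens222)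
  fix a b a' b' a'' b''
  have "(\<lambda>u. regroup (tens (\<alpha>A a) (tens (flip
          (tmap (mlin mA) id (r2l (tmap id R (l2r (tens (tmap id (inv \<alpha>B) u) a''))))))
          (mB (\<alpha>B b') (\<alpha>B b'')))))
      = (\<lambda>u. tmap id mu (T13 TR (tmap (tmap (inv \<alpha>A) (inv \<alpha>B)) id (l2r (tens
          (regroup (tens (\<alpha>A a) (tens (flip u) (\<alpha>B b')))) (tens a'' b''))))))"
    (is "?lhs = ?rhs")
  proof (rule klinear_eqI_tens)
    fix x y
    have "(\<lambda>v. regroup (tens (\<alpha>A a) (tens (flip (tmap (mlin mA) id (r2l (tens x v))))
             (mB (\<alpha>B b') (\<alpha>B b'')))))
        = (\<lambda>v. tmap id mu (reidx (\<lambda>((x, z), y). (x, y, z)) (tens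
             (regroup (tens (\<alpha>A a) (tens (flip v) (\<alpha>B b'')))) (tens x (\<alpha>B b')))))"
      by (rule klinear_eqI_tens) ((intro klinear_intros | simp)+)
    from fun_cong[OF this, of "R (tens (inv \<alpha>B y) a'')"]
    show "?lhs (tens x y) = ?rhs (tens x y)"
      by simp
  qed ((intro klinear_intros | simp)+)
  from fun_cong[OF this, of "R (tens b a')"]
  show "?L (tens (tens a b) (tens (tens a' b') (tens a'' b'')))
      = ?R (tens (tens a b) (tens (tens a' b') (tens a'' b'')))"
    by simp
qed (simp_all add: klinear_comp)

lemma twistor_mult_left:
  "TR \<circ> tmap mu id \<circ> r2l = tmap mu id \<circ> r2l \<circ> companion2 \<circ> tmap id TR" (is "?L = ?R")
proof (rule klinear_eqI_tens222)
  fix a b a' b' a'' b''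
  have "(\<lambda>u. regroup (tens (\<alpha>A (mA a a')) (tens (flip
          (tmap id (mlin mB) (l2r (tmap R id (r2l (tens b (tmap (inv \<alpha>A) id u)))))))
          (\<alpha>B b''))))
      = (\<lambda>u. tmap mu id (r2l (T13 TR (tmap id (tmap id (tmap (inv \<alpha>A) (inv \<alpha>B)))
          (tens (tens a b) (regroup (tens (\<alpha>A a') (tens (flip u) (\<alpha>B b'')))))))))"
    (is "?lhs = ?rhs")
  proof (rule klinear_eqI_tens)
    fix x y
    have "(\<lambda>v. regroup (tens (\<alpha>A (mA a a')) (tens (flip (tmap id (mlin mB) (l2r (tens v y))))
             (\<alpha>B b''))))
        = (\<lambda>v. tmap mu id (r2l (reidx (\<lambda>((x, z), y). (x, y, z)) (tens
             (regroup (tens (\<alpha>A a) (tens (flip v) (\<alpha>B b'')))) (tens (\<alpha>A a') y)))))"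
      by (rule klinear_eqI_tens) ((intro klinear_intros | simp)+)
    from fun_cong[OF this, of "R (tens b (inv \<alpha>A x))"]
    show "?lhs (tens x y) = ?rhs (tens x y)"
      by simp
  qed ((intro klinear_intros | simp)+)
  from fun_cong[OF this, of "R (tens b' a'')"]
  show "?L (tens (tens a b) (tens (tens a' b') (tens a'' b'')))
      = ?R (tens (tens a b) (tens (tens a' b') (tens a'' b'')))"
    by simp
qed (simp_all add: klinear_comp)

text \<open>On generators both sides are determined by u = R(b \<otimes> a') and v = R(b' \<otimes> a''), but each side
evaluates only one of them through T; the other one is reached only after expanding v resp. u into
pure tensors, where compatibility of R with \<alpha>A \<otimes> \<alpha>B makes both sides agree.\<close>
lemma twistor_companions:
  "companion1 \<circ> l2r \<circ> tmap TR id \<circ> r2l \<circ> tmap \<alpha> TR = companion2 \<circ> tmap id TR \<circ> l2r \<circ> tmap TR \<alpha> \<circ> r2l"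
  (is "?L = ?R")
proof (rule klinear_eqI_tens222)
  fix a b a' b' a'' b''
  let ?E = "\<lambda>u x y. T13 TR (tmap (tmap (inv \<alpha>A) (inv \<alpha>B)) id (l2r (tens
      (regroup (tens (\<alpha>A (\<alpha>A a)) (tens (flip (\<alpha> u)) (\<alpha>B y)))) (tens x (\<alpha>B b'')))))"
  let ?E' = "\<lambda>x y v. T13 TR (tmap id (tmap id (tmap (inv \<alpha>A) (inv \<alpha>B))) (tens (tens (\<alpha>A a) y)
      (regroup (tens (\<alpha>A x) (tens (flip (\<alpha> v)) (\<alpha>B (\<alpha>B b'')))))))"
  let ?\<phi> = "\<lambda>v. T13 TR (tmap (tmap (inv \<alpha>A) (inv \<alpha>B)) id (l2r (tmap TR id (r2l (tens
      (tens (\<alpha>A a) (\<alpha>B b)) (regroup (tens (\<alpha>A a') (tens (flip v) (\<alpha>B b'')))))))))"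
  let ?\<psi> = "\<lambda>u. T13 TR (tmap id (tmap id (tmap (inv \<alpha>A) (inv \<alpha>B))) (tmap id TR (l2r (tens
      (regroup (tens (\<alpha>A a) (tens (flip u) (\<alpha>B b')))) (tens (\<alpha>A a'') (\<alpha>B b''))))))"
  have "?\<phi> (R (tens b' a'')) = ?\<psi> (R (tens b a'))"
    by (rule tens_evaluation_interchange[where \<phi>="?\<phi>" and \<psi>="?\<psi>" and E="?E" and E'="?E'"])
       (simp_all add: R_\<alpha>, (intro klinear_intros | simp)+)
  then show "?L (tens (tens a b) (tens (tens a' b') (tens a'' b'')))
      = ?R (tens (tens a b) (tens (tens a' b') (tens a'' b'')))"
    by simp
qed (simp_all add: klinear_comp)

lemma pseudotwistor_twisting_twistor: "pseudotwistor mu \<alpha> TR companion1 companion2"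
  unfolding pseudotwistor_def
  using twistor_commutes_\<alpha> twistor_mult_right twistor_mult_left twistor_companions
  by (simp add: klinear_comp)

end

theorem proposition4p4:
  fixes mA :: "('i \<Rightarrow>\<^sub>0 'k::field) \<Rightarrow> ('i \<Rightarrow>\<^sub>0 'k) \<Rightarrow> ('i \<Rightarrow>\<^sub>0 'k)"
    and mB :: "('j \<Rightarrow>\<^sub>0 'k) \<Rightarrow> ('j \<Rightarrow>\<^sub>0 'k) \<Rightarrow> ('j \<Rightarrow>\<^sub>0 'k)"
    and \<alpha>A :: "('i \<Rightarrow>\<^sub>0 'k) \<Rightarrow> ('i \<Rightarrow>\<^sub>0 'k)"
    and \<alpha>B :: "('j \<Rightarrow>\<^sub>0 'k) \<Rightarrow> ('j \<Rightarrow>\<^sub>0 'k)"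
    and R :: "('j \<times> 'i \<Rightarrow>\<^sub>0 'k) \<Rightarrow> ('i \<times> 'j \<Rightarrow>\<^sub>0 'k)"
    and T :: "(('i \<times> 'j) \<times> ('i \<times> 'j) \<Rightarrow>\<^sub>0 'k) \<Rightarrow> (('i \<times> 'j) \<times> ('i \<times> 'j) \<Rightarrow>\<^sub>0 'k)"
  assumes "assoc_alg mA" and "assoc_alg mB"
    and "alg_endo mA \<alpha>A" and "bij \<alpha>A"
    and "alg_endo mB \<alpha>B" and "bij \<alpha>B"
    and "twisting_map mA mB \<alpha>A \<alpha>B R"
    and T_def: "T = reidx (\<lambda>(a, (b, a'), b'). ((a, b), (a', b')))
                 \<circ> tmap \<alpha>A (tmap (flip \<circ> R) \<alpha>B)
                 \<circ> reidx (\<lambda>((a, b), (a', b')). (a, (b, a'), b'))"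
  shows "pseudotwistor (mlin (tens_mult mA mB)) (tmap \<alpha>A \<alpha>B) T
           (T13 T \<circ> tmap (tmap (inv \<alpha>A) (inv \<alpha>B)) id)
           (T13 T \<circ> tmap id (tmap id (tmap (inv \<alpha>A) (inv \<alpha>B))))
       \<and> hom_associative (\<lambda>x y. mlin (tens_mult mA mB) (T (tens x y))) (tmap \<alpha>A \<alpha>B)
       \<and> (\<forall>a b a' b'. mlin (tens_mult mA mB) (T (tens (tens a b) (tens a' b'))) =
             tmap (mA (\<alpha>A a)) (\<lambda>y. mB y (\<alpha>B b')) (R (tens b a')))"
proof -
  interpret twisting_datum mA mB \<alpha>A \<alpha>B R
    using assms(1-7) by unfold_locales
  have T: "T = twisting_twistor \<alpha>A \<alpha>B R"
    by (simp add: T_def twisting_twistor_def)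
  have "hom_associative (\<lambda>x y. mu (TR (tens x y))) \<alpha>"
    by (rule pseudotwistor_hom_associative[OF pseudotwistor_twisting_twistor])
       (simp_all add: mlin_tens_mult_assoc tmap_mlin_tens_mult kbilinear_A kbilinear_B assms)
  then show ?thesis
    unfolding T
    using pseudotwistor_twisting_twistor
      twisted_mult_tens[OF kbilinear_A kbilinear_B klinear_maps(1-3)] by blast
qed

end
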